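(* Let $\omega\ge2$ and let $\Gamma$ be an $\omega$-clique regular finite simple graph with $m$ cliques of order $\omega$, listed as $c_1,\dots,c_m$. Let $A_C$ be the adjacency matrix of $C_\omega(\Gamma)$ with vertices ordered $c_1,\dots,c_m$, and let $A_L$ be the adjacency matrix of the line graph $L(\Gamma)$ with the edges ordered $e_1,\dots,e_{m\binom{\omega}{2}}$ so that, for each $i$, the edges $e_{(i-1)\binom{\omega}{2}+1},\dots,e_{i\binom{\omega}{2}}$ are exactly the edges of the clique $c_i$. Let $\tilde A=6\binom{\omega}{3}I_m+(\omega-1)^2A_C$, and let $\varphi:\mathbb{R}^m\to\mathbb{R}^{m\binom{\omega}{2}}$ map $(a_1,\dots,a_m)^T$ to the vector obtained by repeating each coordinate $a_i$ consecutively $\binom{\omega}{2}$ times. Then for all $v\in\mathbb{R}^m$, \[v^T\tilde A v=\varphi(v)^T A_L\,\varphi(v).\]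
   Context: A graph is $\omega$-clique regular if it has a nonempty edge set and every edge lies in exactly one clique of order $\omega$ (so the edge sets of the $\omega$-cliques partition the edge set). $C_\omega(\Gamma)$ has as vertices the cliques of order $\omega$, two distinct ones adjacent iff they have nonempty intersection. $L(\Gamma)$ is the line graph (vertices = edges of $\Gamma$, adjacent iff sharing an endpoint). *)

theory Defs
  imports "Jordan_Normal_Form.Matrix"
begin

definition simple_graph :: "'a set \<Rightarrow> 'a set set \<Rightarrow> bool" where
  "simple_graph V E \<longleftrightarrow> finite V \<and> (\<forall>e\<in>E. e \<subseteq> V \<and> card e = 2)"

definition is_clique :: "'a set \<Rightarrow> 'a set set \<Rightarrow> 'a set \<Rightarrow> bool" where
  "is_clique V E K \<longleftrightarrow> K \<subseteq> V \<and> (\<forall>x\<in>K. \<forall>y\<in>K. x \<noteq> y \<longrightarrow> {x, y} \<in> E)"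

definition cliques_of_order :: "'a set \<Rightarrow> 'a set set \<Rightarrow> nat \<Rightarrow> 'a set set" where
  "cliques_of_order V E w = {K. is_clique V E K \<and> card K = w}"

definition clique_regular :: "'a set \<Rightarrow> 'a set set \<Rightarrow> nat \<Rightarrow> bool" where
  "clique_regular V E w \<longleftrightarrow> E \<noteq> {} \<and>
     (\<forall>e\<in>E. \<exists>!K. K \<in> cliques_of_order V E w \<and> e \<subseteq> K)"

definition clique_graph_adj :: "'a set list \<Rightarrow> real mat" where
  "clique_graph_adj cs = mat (length cs) (length cs)
     (\<lambda>(i, j). if i \<noteq> j \<and> cs ! i \<inter> cs ! j \<noteq> {} then 1 else 0)"

definition line_graph_adj :: "'a set list \<Rightarrow> real mat" where
  "line_graph_adj es = mat (length es) (length es)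
     (\<lambda>(k, l). if k \<noteq> l \<and> es ! k \<inter> es ! l \<noteq> {} then 1 else 0)"

definition repeat_vec :: "nat \<Rightarrow> real vec \<Rightarrow> real vec" where
  "repeat_vec b v = vec (dim_vec v * b) (\<lambda>k. v $ (k div b))"

end

theory Submission imports Defs begin

(* Expanding the quadratic form of the line graph at phi(v) groups the edges clique by clique:
   the coefficient of v_i v_j is the number N(c_i, c_j) of ordered pairs of distinct intersecting
   edges e of c_i and f of c_j. Inside one clique every edge meets 2(w - 2) others, so
   N(c, c) = (w choose 2) * 2(w - 2) = 6 (w choose 3). Two distinct w-cliques share at most one
   vertex, since a common edge would lie in both; so N(c, c') counts the (w - 1)^2 pairs of edges
   through the common vertex if c and c' meet, and is 0 otherwise. *)

abbreviation two_subsets :: "'a set \<Rightarrow> 'a set set" where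
  "two_subsets K \<equiv> {B. B \<subseteq> K \<and> card B = 2}"

definition meets :: "'a set \<Rightarrow> 'a set \<Rightarrow> bool" where
  "meets e f \<longleftrightarrow> e \<noteq> f \<and> e \<inter> f \<noteq> {}"

lemma card_two_subsets_containing:
  assumes "finite K" "x \<in> K"
  shows "card {f \<in> two_subsets K. x \<in> f} = card K - 1"
proof -
  have "{f \<in> two_subsets K. x \<in> f} = (\<lambda>z. {x, z}) ` (K - {x})"
    using assms by (auto simp: card_2_iff)
  moreover have "inj_on (\<lambda>z. {x, z}) (K - {x})"
    by (auto simp: inj_on_def doubleton_eq_iff)
  ultimately show ?thesis
    using assms by (simp add: card_image)
qed

lemma card_2_eq_doubleton:
  assumes "card f = 2" "x \<in> f" "y \<in> f" "x \<noteq> y"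
  shows "f = {x, y}"
proof -
  have "finite f"
    using assms(1) card.infinite by fastforce
  then have "{x, y} = f"
    using assms by (intro card_seteq) auto
  then show ?thesis ..
qed

lemma card_two_subsets_containing_avoiding:
  assumes "finite K" "x \<in> K" "y \<in> K" "x \<noteq> y"
  shows "card {f \<in> two_subsets K. x \<in> f \<and> y \<notin> f} = card K - 2"
proof -
  have "{f \<in> two_subsets K. x \<in> f \<and> y \<notin> f} = {f \<in> two_subsets K. x \<in> f} - {{x, y}}"
    using assms(4) card_2_eq_doubleton[of _ x y] by auto
  moreover have "{x, y} \<in> {f \<in> two_subsets K. x \<in> f}"
    using assms by simp
  ultimately show ?thesis
    using assms card_two_subsets_containing[OF assms(1,2)] by (simp add: card_Diff_singleton)
qed

lemma card_two_subsets_meets: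
  assumes "finite K" "e \<in> two_subsets K"
  shows "card {f \<in> two_subsets K. meets e f} = 2 * (card K - 2)"
proof -
  obtain x y where e: "e = {x, y}" "x \<noteq> y"
    using assms(2) card_2_iff[of e] by blast
  with assms(2) have xy: "x \<in> K" "y \<in> K"
    by auto
  have "meets e f \<longleftrightarrow> x \<in> f \<and> y \<notin> f \<or> y \<in> f \<and> x \<notin> f" if "card f = 2" for f
    using e card_2_eq_doubleton[OF that, of x y] by (auto simp: meets_def)
  then have "{f \<in> two_subsets K. meets e f}
      = {f \<in> two_subsets K. x \<in> f \<and> y \<notin> f} \<union> {f \<in> two_subsets K. y \<in> f \<and> x \<notin> f}"
    by auto
  moreover have "card ({f \<in> two_subsets K. x \<in> f \<and> y \<notin> f} \<union> {f \<in> two_subsets K. y \<in> f \<and> x \<notin> f})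
      = card {f \<in> two_subsets K. x \<in> f \<and> y \<notin> f} + card {f \<in> two_subsets K. y \<in> f \<and> x \<notin> f}"
    using assms(1) by (intro card_Un_disjoint) auto
  ultimately show ?thesis
    using card_two_subsets_containing_avoiding[OF assms(1) xy e(2)]
      card_two_subsets_containing_avoiding[OF assms(1) xy(2,1) e(2)[symmetric]] by simp
qed

lemma six_mult_choose_three: "6 * (n choose 3) = (n choose 2) * (2 * (n - 2))"
proof -
  have "3 * (n choose 3) = n * ((n - 1) choose 2)"
    using binomial_absorption[of 2 n] by (simp add: numeral_eq_Suc)
  moreover have "(n - 2) * (n choose 2) = n * ((n - 1) choose 2)"
    using binomial_absorb_comp[of n 2] by simp
  ultimately show ?thesis
    by (simp add: algebra_simps)
qed

lemma sum_meets_two_subsets_same: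
  assumes "finite K"
  shows "(\<Sum>e\<in>two_subsets K. \<Sum>f\<in>two_subsets K. of_bool (meets e f)) = real (6 * (card K choose 3))"
proof -
  have "(\<Sum>f\<in>two_subsets K. of_bool (meets e f)) = real (2 * (card K - 2))"
    if "e \<in> two_subsets K" for e
    using card_two_subsets_meets[OF assms that] assms by (simp add: Int_def)
  then have "(\<Sum>e\<in>two_subsets K. \<Sum>f\<in>two_subsets K. of_bool (meets e f))
      = real ((card K choose 2) * (2 * (card K - 2)))"
    using assms by (simp add: n_subsets)
  then show ?thesis
    by (simp only: six_mult_choose_three)
qed

lemma sum_meets_two_subsets_single_common:
  assumes "finite K" "finite K'" "K \<inter> K' = {x}"
  shows "(\<Sum>e\<in>two_subsets K. \<Sum>f\<in>two_subsets K'. of_bool (meets e f))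
       = real ((card K - 1) * (card K' - 1))"
proof -
  have x: "x \<in> K" "x \<in> K'"
    using assms(3) by auto
  have "meets e f \<longleftrightarrow> x \<in> e \<and> x \<in> f" if "e \<in> two_subsets K" "f \<in> two_subsets K'" for e f
  proof -
    have "e \<inter> f \<subseteq> {x}"
      using that assms(3) by auto
    moreover have "\<not> e \<subseteq> {x}"
      using that card_mono[of "{x}" e] by auto
    ultimately show ?thesis
      unfolding meets_def by auto
  qed
  then have "(\<Sum>e\<in>two_subsets K. \<Sum>f\<in>two_subsets K'. of_bool (meets e f))
      = (\<Sum>e\<in>two_subsets K. \<Sum>f\<in>two_subsets K'. of_bool (x \<in> e) * of_bool (x \<in> f) :: real)"
    by (intro sum.cong refl) simp
  also have "\<dots> = (\<Sum>e\<in>two_subsets K. of_bool (x \<in> e)) * (\<Sum>f\<in>two_subsets K'. of_bool (x \<in> f))"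
    by (rule sum_product[symmetric])
  also have "\<dots> = real (card K - 1) * real (card K' - 1)"
    using assms card_two_subsets_containing[OF assms(1) x(1)] card_two_subsets_containing[OF assms(2) x(2)]
    by (simp add: Int_def)
  finally show ?thesis
    by simp
qed

lemma sum_meets_two_subsets_disjoint:
  assumes "K \<inter> K' = {}"
  shows "(\<Sum>e\<in>two_subsets K. \<Sum>f\<in>two_subsets K'. of_bool (meets e f)) = (0::real)"
  using assms by (intro sum.neutral ballI) (auto simp: meets_def)

lemma clique_edges_eq_two_subsets:
  assumes "simple_graph V E" "is_clique V E K"
  shows "{e \<in> E. e \<subseteq> K} = two_subsets K"
  using assms unfolding simple_graph_def is_clique_def by (auto simp: card_2_iff)

lemma clique_regular_cliques_Int_singleton:
  assumes "clique_regular V E w" "K \<in> cliques_of_order V E w" "K' \<in> cliques_of_order V E w"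
    and "K \<noteq> K'" "x \<in> K \<inter> K'"
  shows "K \<inter> K' = {x}"
proof (rule ccontr)
  assume "K \<inter> K' \<noteq> {x}"
  then obtain y where y: "y \<in> K \<inter> K'" "y \<noteq> x"
    using assms(5) by blast
  then have "{x, y} \<in> E"
    using assms(2,5) by (auto simp: cliques_of_order_def is_clique_def)
  then show False
    using assms y unfolding clique_regular_def by blast
qed

lemma sum_meets_cliques:
  assumes "simple_graph V E" "clique_regular V E w"
    and "K \<in> cliques_of_order V E w" "K' \<in> cliques_of_order V E w"
  shows "(\<Sum>e\<in>two_subsets K. \<Sum>f\<in>two_subsets K'. of_bool (meets e f))
       = real (6 * (w choose 3)) * of_bool (K = K') + real ((w - 1)^2) * of_bool (meets K K')"
proof -
  have finite: "finite K" "finite K'" and card: "card K = w" "card K' = w"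
    using assms(1,3,4) finite_subset
    by (auto simp: simple_graph_def cliques_of_order_def is_clique_def)
  consider "K = K'" | "K \<noteq> K'" "K \<inter> K' = {}" | x where "K \<noteq> K'" "x \<in> K \<inter> K'"
    by blast
  then show ?thesis
  proof cases
    case 1
    then show ?thesis
      using sum_meets_two_subsets_same[OF finite(1)] card by (simp add: meets_def)
  next
    case 2
    then show ?thesis
      using sum_meets_two_subsets_disjoint[OF 2(2)] by (simp add: meets_def)
  next
    case 3
    then show ?thesis
      using sum_meets_two_subsets_single_common[OF finite clique_regular_cliques_Int_singleton[OF assms(2-4) 3]] card
      by (auto simp: meets_def power2_eq_square)
  qed
qed

lemma scalar_prod_mult_mat_vec_eq_sum:
  fixes A :: "'a :: comm_semiring_0 mat"
  assumes "A \<in> carrier_mat n n" "v \<in> carrier_vec n"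
  shows "v \<bullet> (A *\<^sub>v v) = (\<Sum>i<n. \<Sum>j<n. v $ i * A $$ (i, j) * v $ j)"
  using assms by (simp add: scalar_prod_def row_def sum_distrib_left atLeast0LessThan mult.assoc)

lemma sum_lessThan_mult_blocks:
  fixes m b :: nat
  shows "(\<Sum>k<m * b. f k) = (\<Sum>i<m. \<Sum>p<b. f (i * b + p))"
proof -
  have "sum f {i * b..<i * b + b} = (\<Sum>p<b. f (i * b + p))" for i
    using sum.shift_bounds_nat_ivl[of f 0 "i * b" b] by (simp add: atLeast0LessThan add.commute)
  then show ?thesis
    using sum.nat_group[of f b m] by simp
qed

lemma block_end_le:
  fixes i m b :: nat
  assumes "i < m"
  shows "i * b + b \<le> m * b"
  using mult_le_mono1[of "Suc i" m b] assms by simp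

lemma repeat_vec_index:
  assumes "i < dim_vec v" "p < b"
  shows "repeat_vec b v $ (i * b + p) = v $ i"
  using assms block_end_le[OF assms(1), of b] by (simp add: repeat_vec_def)

lemma repeat_vec_quadratic_form:
  assumes "A \<in> carrier_mat (m * b) (m * b)" "v \<in> carrier_vec m"
  shows "repeat_vec b v \<bullet> (A *\<^sub>v repeat_vec b v)
       = (\<Sum>i<m. \<Sum>j<m. v $ i * (\<Sum>p<b. \<Sum>q<b. A $$ (i * b + p, j * b + q)) * v $ j)"
proof -
  have "repeat_vec b v \<in> carrier_vec (m * b)"
    using assms(2) by (simp add: repeat_vec_def)
  then have "repeat_vec b v \<bullet> (A *\<^sub>v repeat_vec b v)
      = (\<Sum>i<m. \<Sum>p<b. \<Sum>j<m. \<Sum>q<b. v $ i * A $$ (i * b + p, j * b + q) * v $ j)"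
    using assms by (simp add: scalar_prod_mult_mat_vec_eq_sum sum_lessThan_mult_blocks repeat_vec_index)
  also have "\<dots> = (\<Sum>i<m. \<Sum>j<m. v $ i * (\<Sum>p<b. \<Sum>q<b. A $$ (i * b + p, j * b + q)) * v $ j)"
    by (rule sum.cong[OF refl], subst sum.swap) (simp add: sum_distrib_left sum_distrib_right)
  finally show ?thesis .
qed

lemma sum_block_nth:
  assumes "distinct xs" "length xs = m * b" "i < m"
  shows "(\<Sum>p<b. f (xs ! (i * b + p))) = (\<Sum>x\<in>set (take b (drop (i * b) xs)). f x)"
proof -
  let ?ys = "take b (drop (i * b) xs)"
  have block: "i * b + b \<le> length xs"
    using block_end_le[OF assms(3)] assms(2) by simp
  then have "length ?ys = b"
    by simp
  moreover have "?ys ! p = xs ! (i * b + p)" if "p < b" for p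
    using block that by simp
  moreover have "distinct ?ys"
    using assms(1) by simp
  ultimately show ?thesis
    using sum.reindex_bij_betw[OF bij_betw_nth[OF \<open>distinct ?ys\<close> refl refl], of f]
    by (simp add: lessThan_atLeast0)
qed

lemma line_graph_adj_index:
  assumes "distinct es" "k < length es" "l < length es"
  shows "line_graph_adj es $$ (k, l) = of_bool (meets (es ! k) (es ! l))"
  using assms by (simp add: line_graph_adj_def meets_def nth_eq_iff_index_eq)

lemma line_graph_adj_block_sum:
  assumes "distinct es" "length es = m * b" "i < m" "j < m"
  shows "(\<Sum>p<b. \<Sum>q<b. line_graph_adj es $$ (i * b + p, j * b + q))
       = (\<Sum>e\<in>set (take b (drop (i * b) es)). \<Sum>f\<in>set (take b (drop (j * b) es)). of_bool (meets e f))"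
proof -
  have "(\<Sum>p<b. \<Sum>q<b. line_graph_adj es $$ (i * b + p, j * b + q))
      = (\<Sum>p<b. \<Sum>q<b. of_bool (meets (es ! (i * b + p)) (es ! (j * b + q))))"
    using assms block_end_le[OF assms(3), of b] block_end_le[OF assms(4), of b]
    by (intro sum.cong refl) (simp add: line_graph_adj_index)
  also have "\<dots> = (\<Sum>p<b. \<Sum>f\<in>set (take b (drop (j * b) es)). of_bool (meets (es ! (i * b + p)) f))"
    by (rule sum.cong[OF refl], rule sum_block_nth[OF assms(1,2,4)])
  also have "\<dots> = (\<Sum>e\<in>set (take b (drop (i * b) es)). \<Sum>f\<in>set (take b (drop (j * b) es)). of_bool (meets e f))"
    by (rule sum_block_nth[OF assms(1,2,3)])
  finally show ?thesis .
qed

theorem lemma3: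
  fixes V :: "'a set" and E :: "'a set set" and w :: nat
    and cs :: "'a set list" and es :: "'a set list" and v :: "real vec"
  assumes "w \<ge> 2"
    and "simple_graph V E"
    and "clique_regular V E w"
    and "distinct cs" and "set cs = cliques_of_order V E w"
    and "distinct es" and "set es = E"
    and "length es = length cs * (w choose 2)"
    and "\<forall>i < length cs.
           set (take (w choose 2) (drop (i * (w choose 2)) es)) = {e \<in> E. e \<subseteq> cs ! i}"
    and "v \<in> carrier_vec (length cs)"
  shows "v \<bullet> ((real (6 * (w choose 3)) \<cdot>\<^sub>m 1\<^sub>m (length cs)
                 + real ((w - 1)^2) \<cdot>\<^sub>m clique_graph_adj cs) *\<^sub>v v)
         = repeat_vec (w choose 2) v \<bullet> (line_graph_adj es *\<^sub>v repeat_vec (w choose 2) v)"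
proof -
  let ?b = "w choose 2" and ?m = "length cs"
  let ?M = "real (6 * (w choose 3)) \<cdot>\<^sub>m 1\<^sub>m ?m + real ((w - 1)^2) \<cdot>\<^sub>m clique_graph_adj cs"
  have clique: "cs ! i \<in> cliques_of_order V E w" if "i < ?m" for i
    using assms(5) that nth_mem by blast
  have block: "set (take ?b (drop (i * ?b) es)) = two_subsets (cs ! i)" if "i < ?m" for i
    using assms(9) that clique_edges_eq_two_subsets[OF assms(2)] clique[OF that]
    by (simp add: cliques_of_order_def)
  have entry: "(\<Sum>p<?b. \<Sum>q<?b. line_graph_adj es $$ (i * ?b + p, j * ?b + q)) = ?M $$ (i, j)"
    if "i < ?m" "j < ?m" for i j
    using that line_graph_adj_block_sum[OF assms(6,8) that] block[OF that(1)] block[OF that(2)]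
      sum_meets_cliques[OF assms(2,3) clique[OF that(1)] clique[OF that(2)]]
      nth_eq_iff_index_eq[OF assms(4) that]
    by (simp add: clique_graph_adj_def meets_def)
  have "line_graph_adj es \<in> carrier_mat (?m * ?b) (?m * ?b)"
    using assms(8) by (simp add: line_graph_adj_def)
  moreover have "?M \<in> carrier_mat ?m ?m"
    by (simp add: clique_graph_adj_def)
  ultimately have "repeat_vec ?b v \<bullet> (line_graph_adj es *\<^sub>v repeat_vec ?b v)
      = v \<bullet> (?M *\<^sub>v v)"
    using assms(10) entry by (simp add: repeat_vec_quadratic_form scalar_prod_mult_mat_vec_eq_sum)
  then show ?thesis ..
qed

end
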